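(* Let $r\ge 3$, $k\ge 2$, let $H=(V,\mathcal{E})$ be an $r$-minimal hypergraph and let $c$ be a $k$-coloring of $H$. For $v\in V$ define: $d_1^i(v)=|\{e\in\mathcal{E}(v): |c(e)|=2,\ c(e\setminus\{v\})=\{i\}\}|$ for each color $i\ne c(v)$, and $d_1(v)=\sum_{i\ne c(v)}d_1^i(v)$; $d_2(v)=|\{e\in\mathcal{E}(v): |c(e)|=1\}|$; $d_3(v)=|\{e\in\mathcal{E}(v): |c(e)|=2 \text{ and there is } v'\in e,\ v'\ne v, \text{ with } |c(e\setminus\{v'\})|=1\}|$; $d_4(v)=|\mathcal{E}(v)|-(d_1(v)+d_2(v)+d_3(v))$; and $D_j=\sum_{v\in V}d_j(v)$ for $j=1,2,3,4$. Then: (1) $D_1+D_2+D_3+D_4=\sum_{v\in V}|\mathcal{E}(v)|$; (2) $D_3\ge (r-1)D_1$; (3) if $c$ is a Nash equilibrium of the game with NM players, then $D_1\ge (k-1)D_2$.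
   Context: A hypergraph $H=(V,\mathcal{E})$ consists of a finite set $V$ of vertices and a finite set $\mathcal{E}$ of nonempty subsets of $V$; it is $r$-minimal if $|e|\ge r$ for all $e\in\mathcal{E}$. A $k$-coloring is a map $c:V\to[k]$; for $S\subseteq V$, $c(S)$ is the set of colors of vertices of $S$. $\mathcal{E}(v)=\{e\in\mathcal{E}: v\in e\}$. With NM (non-monochromatic seeking) players, $u_v(c)=|\{e\in\mathcal{E}(v): |c(e)|>1\}|$. A coloring $c$ is a Nash equilibrium if $u_v(c)\ge u_v(c_{-v},i)$ for all $v\in V$, $i\in[k]$, where $(c_{-v},i)$ is $c$ with the color of $v$ replaced by $i$. *)

theory Defs
  imports Main
begin

definition hypergraph :: "'a set \<Rightarrow> 'a set set \<Rightarrow> bool" where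
  "hypergraph V E \<longleftrightarrow> finite V \<and> finite E \<and> (\<forall>e\<in>E. e \<noteq> {} \<and> e \<subseteq> V)"

definition r_minimal :: "nat \<Rightarrow> 'a set set \<Rightarrow> bool" where
  "r_minimal r E \<longleftrightarrow> (\<forall>e\<in>E. card e \<ge> r)"

definition k_coloring :: "nat \<Rightarrow> 'a set \<Rightarrow> ('a \<Rightarrow> nat) \<Rightarrow> bool" where
  "k_coloring k V c \<longleftrightarrow> (\<forall>v\<in>V. c v \<in> {1..k})"

definition edges_at :: "'a set set \<Rightarrow> 'a \<Rightarrow> 'a set set" where
  "edges_at E v = {e\<in>E. v \<in> e}"

text \<open>Utility of an NM (non-monochromatic seeking) player.\<close>
definition u_NM :: "'a set set \<Rightarrow> ('a \<Rightarrow> nat) \<Rightarrow> 'a \<Rightarrow> nat" where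
  "u_NM E c v = card {e \<in> edges_at E v. card (c ` e) > 1}"

definition nash_NM :: "nat \<Rightarrow> 'a set \<Rightarrow> 'a set set \<Rightarrow> ('a \<Rightarrow> nat) \<Rightarrow> bool" where
  "nash_NM k V E c \<longleftrightarrow> (\<forall>v\<in>V. \<forall>i\<in>{1..k}. u_NM E c v \<ge> u_NM E (c(v := i)) v)"

definition d1i :: "'a set set \<Rightarrow> ('a \<Rightarrow> nat) \<Rightarrow> 'a \<Rightarrow> nat \<Rightarrow> nat" where
  "d1i E c v i = card {e \<in> edges_at E v. card (c ` e) = 2 \<and> c ` (e - {v}) = {i}}"

definition d1 :: "nat \<Rightarrow> 'a set set \<Rightarrow> ('a \<Rightarrow> nat) \<Rightarrow> 'a \<Rightarrow> nat" where
  "d1 k E c v = (\<Sum>i\<in>{1..k} - {c v}. d1i E c v i)"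

definition d2 :: "'a set set \<Rightarrow> ('a \<Rightarrow> nat) \<Rightarrow> 'a \<Rightarrow> nat" where
  "d2 E c v = card {e \<in> edges_at E v. card (c ` e) = 1}"

definition d3 :: "'a set set \<Rightarrow> ('a \<Rightarrow> nat) \<Rightarrow> 'a \<Rightarrow> nat" where
  "d3 E c v = card {e \<in> edges_at E v. card (c ` e) = 2 \<and>
                    (\<exists>v'\<in>e. v' \<noteq> v \<and> card (c ` (e - {v'})) = 1)}"

definition d4 :: "nat \<Rightarrow> 'a set set \<Rightarrow> ('a \<Rightarrow> nat) \<Rightarrow> 'a \<Rightarrow> int" where
  "d4 k E c v = int (card (edges_at E v)) - int (d1 k E c v + d2 E c v + d3 E c v)"

end

theory Submission
  imports Defs
begin

text \<open>
  For (2), count pairs (v, e) edge by edge: an edge of size at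
  least 3 has at most one vertex alone in its colour, and if it has one, all its other
  \<open>\<ge> r - 1\<close> vertices are counted by d3. For (3), a vertex v recolouring to i \<noteq> c v makes
  non-monochromatic exactly the edges at v not counted by \<open>d1i v i\<close>, while under c the
  non-monochromatic edges at v are those not counted by \<open>d2 v\<close>; so the equilibrium condition
  says \<open>d2 v \<le> d1i v i\<close> for each of the k - 1 colours i \<noteq> c v.
\<close>

lemma sum_card_incident_swap:
  assumes "finite V" "finite E" "\<forall>e\<in>E. e \<subseteq> V"
  shows "(\<Sum>v\<in>V. card {e\<in>E. v \<in> e \<and> Q v e}) = (\<Sum>e\<in>E. card {v\<in>e. Q v e})"
proof -
  have "(\<Sum>v\<in>V. card {e\<in>E. v \<in> e \<and> Q v e}) = (\<Sum>v\<in>V. \<Sum>e\<in>E. if v \<in> e \<and> Q v e then 1 else 0)"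
    using assms by (simp add: sum.inter_filter[symmetric])
  also have "\<dots> = (\<Sum>e\<in>E. \<Sum>v\<in>V. if v \<in> e \<and> Q v e then 1 else 0)"
    by (rule sum.swap)
  also have "\<dots> = (\<Sum>e\<in>E. card {v\<in>V. v \<in> e \<and> Q v e})"
    using assms by (simp add: sum.inter_filter[symmetric])
  also have "\<dots> = (\<Sum>e\<in>E. card {v\<in>e. Q v e})"
    using assms by (intro sum.cong refl arg_cong[where f = card]) blast
  finally show ?thesis .
qed

text \<open>The incidences (v, e) counted by d1 (see d1_eq_card_lone_vertex).\<close>
definition lone_vertex :: "('a \<Rightarrow> nat) \<Rightarrow> 'a set \<Rightarrow> 'a \<Rightarrow> bool" where
  "lone_vertex c e v \<longleftrightarrow> v \<in> e \<and> card (c ` e) = 2 \<and> card (c ` (e - {v})) = 1"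

lemma image_insert_Diff: "v \<in> e \<Longrightarrow> c ` e = insert (c v) (c ` (e - {v}))"
  by blast

lemma card_image_eq_2_if_rest_singleton:
  assumes "v \<in> e" "c ` (e - {v}) = {i}" "i \<noteq> c v"
  shows "card (c ` e) = 2"
  using assms by (simp add: image_insert_Diff[OF assms(1)])

lemma lone_vertex_iff_rest_singleton:
  "lone_vertex c e v \<longleftrightarrow> v \<in> e \<and> (\<exists>i. i \<noteq> c v \<and> c ` (e - {v}) = {i})"
proof
  assume lone: "lone_vertex c e v"
  then have v: "v \<in> e" and "card (c ` (e - {v})) = 1"
    by (simp_all add: lone_vertex_def)
  from this(2) obtain i where i: "c ` (e - {v}) = {i}"
    by (rule card_1_singletonE)
  have "card (insert (c v) {i}) = 2"
    using lone by (simp add: lone_vertex_def image_insert_Diff[OF v] i)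
  then have "i \<noteq> c v" by auto
  with i v show "v \<in> e \<and> (\<exists>i. i \<noteq> c v \<and> c ` (e - {v}) = {i})" by blast
next
  assume "v \<in> e \<and> (\<exists>i. i \<noteq> c v \<and> c ` (e - {v}) = {i})"
  then obtain i where "v \<in> e" "i \<noteq> c v" "c ` (e - {v}) = {i}" by blast
  then show "lone_vertex c e v"
    using card_image_eq_2_if_rest_singleton by (simp add: lone_vertex_def)
qed

lemma d1_eq_card_lone_vertex:
  assumes "hypergraph V E" "k_coloring k V c"
  shows "d1 k E c v = card {e \<in> edges_at E v. lone_vertex c e v}"
proof -
  let ?D = "\<lambda>i. {e \<in> edges_at E v. card (c ` e) = 2 \<and> c ` (e - {v}) = {i}}"
  have "finite (edges_at E v)"
    using assms(1) by (simp add: hypergraph_def edges_at_def)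
  then have "d1 k E c v = card (\<Union>i\<in>{1..k} - {c v}. ?D i)"
    unfolding d1_def d1i_def by (subst card_UN_disjoint) auto
  also have "(\<Union>i\<in>{1..k} - {c v}. ?D i) = {e \<in> edges_at E v. lone_vertex c e v}"
  proof (intro equalityI subsetI)
    fix e assume "e \<in> (\<Union>i\<in>{1..k} - {c v}. ?D i)"
    then show "e \<in> {e \<in> edges_at E v. lone_vertex c e v}"
      by (auto simp: lone_vertex_iff_rest_singleton edges_at_def)
  next
    fix e assume "e \<in> {e \<in> edges_at E v. lone_vertex c e v}"
    then have e: "e \<in> edges_at E v" and lone: "lone_vertex c e v" by auto
    then obtain i where i: "i \<noteq> c v" "c ` (e - {v}) = {i}"
      by (auto simp: lone_vertex_iff_rest_singleton)
    then obtain w where "w \<in> e" "c w = i" by blast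
    moreover have "e \<subseteq> V"
      using e assms(1) by (auto simp: edges_at_def hypergraph_def)
    ultimately have "i \<in> {1..k}"
      using assms(2) by (auto simp: k_coloring_def)
    with e i lone show "e \<in> (\<Union>i\<in>{1..k} - {c v}. ?D i)"
      by (auto simp: lone_vertex_def)
  qed
  finally show ?thesis .
qed

lemma lone_vertex_unique:
  assumes "lone_vertex c e u" "lone_vertex c e v" "card e \<ge> 3"
  shows "u = v"
proof (rule ccontr)
  assume "u \<noteq> v"
  obtain i j where i: "c ` (e - {u}) = {i}" and j: "c ` (e - {v}) = {j}" and "u \<in> e" "v \<in> e"
    using assms(1,2) by (auto simp: lone_vertex_iff_rest_singleton)
  have "finite e"
    using assms(3) card.infinite by fastforce
  then have "card (e - {u, v}) > 0"
    using assms(3) \<open>u \<noteq> v\<close> \<open>u \<in> e\<close> \<open>v \<in> e\<close> by (simp add: card_Diff_subset)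
  then obtain w where "w \<in> e" "w \<noteq> u" "w \<noteq> v"
    by (auto simp: card_gt_0_iff)
  then have "c w \<in> c ` (e - {u})" "c w \<in> c ` (e - {v})" by auto
  then have "i = j" using i j by simp
  moreover have "c u = j" using j \<open>u \<in> e\<close> \<open>u \<noteq> v\<close> by blast
  ultimately have "c ` e = {j}"
    using i image_insert_Diff[of u e c] \<open>u \<in> e\<close> by simp
  then show False
    using assms(1) by (simp add: lone_vertex_def)
qed

lemma d3_edge_bound:
  assumes "finite e" "card e \<ge> r" "r \<ge> 3"
  shows "(r - 1) * card {v\<in>e. lone_vertex c e v} \<le> card {w\<in>e. \<exists>v. v \<noteq> w \<and> lone_vertex c e v}"
proof (cases "\<exists>v. lone_vertex c e v")
  case True
  then obtain v where v: "lone_vertex c e v" ..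
  have "v \<in> e" and card3: "card e \<ge> 3"
    using v assms(2,3) by (auto simp: lone_vertex_def)
  then have "{v\<in>e. lone_vertex c e v} = {v}"
    using v lone_vertex_unique[OF _ v card3] by blast
  moreover have "e - {v} \<subseteq> {w\<in>e. \<exists>v. v \<noteq> w \<and> lone_vertex c e v}"
    using v by (intro subsetI CollectI conjI exI[of _ v]) auto
  then have "card (e - {v}) \<le> card {w\<in>e. \<exists>v. v \<noteq> w \<and> lone_vertex c e v}"
    using assms(1) by (simp add: card_mono)
  moreover have "card (e - {v}) = card e - 1"
    using v assms(1) by (simp add: lone_vertex_def)
  ultimately show ?thesis using assms(2) by simp
qed simp

lemma d3_eq_card_other_lone_vertex:
  "d3 E c v = card {e \<in> edges_at E v. \<exists>w. w \<noteq> v \<and> lone_vertex c e w}"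
  unfolding d3_def lone_vertex_def by (intro arg_cong[where f = card]) auto

lemma sum_d3_ge_sum_d1:
  assumes "hypergraph V E" "r_minimal r E" "r \<ge> 3" "k_coloring k V c"
  shows "(r - 1) * (\<Sum>v\<in>V. d1 k E c v) \<le> (\<Sum>v\<in>V. d3 E c v)"
proof -
  have fin: "finite V" "finite E" "\<forall>e\<in>E. e \<subseteq> V"
    using assms(1) by (auto simp: hypergraph_def)
  have "(\<Sum>v\<in>V. d1 k E c v) = (\<Sum>e\<in>E. card {v\<in>e. lone_vertex c e v})"
    using sum_card_incident_swap[OF fin]
    by (simp add: d1_eq_card_lone_vertex[OF assms(1,4)] edges_at_def)
  moreover have "(\<Sum>v\<in>V. d3 E c v) = (\<Sum>e\<in>E. card {v\<in>e. \<exists>w. w \<noteq> v \<and> lone_vertex c e w})"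
    using sum_card_incident_swap[OF fin]
    by (simp add: d3_eq_card_other_lone_vertex edges_at_def)
  moreover have "(r - 1) * card {v\<in>e. lone_vertex c e v}
      \<le> card {v\<in>e. \<exists>w. w \<noteq> v \<and> lone_vertex c e w}" if "e \<in> E" for e
  proof -
    have "finite e" using that fin by (meson finite_subset)
    then show ?thesis
      using that assms(2,3) by (intro d3_edge_bound) (auto simp: r_minimal_def)
  qed
  ultimately show ?thesis
    by (simp add: sum_distrib_left sum_mono)
qed

lemma u_NM_eq_card_minus_d2:
  assumes "hypergraph V E"
  shows "u_NM E c v = card (edges_at E v) - d2 E c v"
proof -
  have "{e \<in> edges_at E v. card (c ` e) > 1}
      = edges_at E v - {e \<in> edges_at E v. card (c ` e) = 1}"
  proof -
    have "card (c ` e) \<noteq> 0" if "e \<in> edges_at E v" for e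
      using that assms finite_subset by (fastforce simp: edges_at_def hypergraph_def)
    then show ?thesis by fastforce
  qed
  moreover have "finite (edges_at E v)"
    using assms by (simp add: hypergraph_def edges_at_def)
  ultimately show ?thesis
    unfolding u_NM_def d2_def by (simp add: card_Diff_subset)
qed

lemma card_image_recolour_gt_1_iff:
  assumes "finite e" "v \<in> e" "e - {v} \<noteq> {}"
  shows "card (c(v := i) ` e) > 1 \<longleftrightarrow> c ` (e - {v}) \<noteq> {i}"
proof -
  have "c(v := i) ` e = insert i (c ` (e - {v}))"
    using assms(2) by auto
  moreover have "card (insert i (c ` (e - {v}))) \<le> 1 \<longleftrightarrow> c ` (e - {v}) \<subseteq> {i}"
    using assms(1) by (auto simp: card_le_Suc0_iff_eq)
  moreover have "c ` (e - {v}) \<subseteq> {i} \<longleftrightarrow> c ` (e - {v}) = {i}"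
    using assms(3) by blast
  ultimately show ?thesis
    by (simp only: not_le[symmetric])
qed

lemma u_NM_recolour_eq_card_minus_d1i:
  assumes "hypergraph V E" "\<forall>e\<in>edges_at E v. card e \<ge> 2" "i \<noteq> c v"
  shows "u_NM E (c(v := i)) v = card (edges_at E v) - d1i E c v i"
proof -
  have "{e \<in> edges_at E v. card (c(v := i) ` e) > 1}
      = edges_at E v - {e \<in> edges_at E v. card (c ` e) = 2 \<and> c ` (e - {v}) = {i}}"
  proof -
    have "card (c(v := i) ` e) > 1 \<longleftrightarrow> \<not> (card (c ` e) = 2 \<and> c ` (e - {v}) = {i})"
      if e: "e \<in> edges_at E v" for e
    proof -
      have fin: "finite e" and v: "v \<in> e"
        using e assms(1) finite_subset by (auto simp: edges_at_def hypergraph_def)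
      have "card (e - {v}) \<ge> 1"
        using e assms(2) v by (auto simp: edges_at_def)
      then have "e - {v} \<noteq> {}" by (metis card.empty not_one_le_zero)
      then have "card (c(v := i) ` e) > 1 \<longleftrightarrow> c ` (e - {v}) \<noteq> {i}"
        using fin v by (rule card_image_recolour_gt_1_iff[rotated 2])
      moreover have "c ` (e - {v}) = {i} \<Longrightarrow> card (c ` e) = 2"
        using v assms(3) card_image_eq_2_if_rest_singleton by metis
      ultimately show ?thesis by blast
    qed
    then show ?thesis by blast
  qed
  moreover have "finite (edges_at E v)"
    using assms by (simp add: hypergraph_def edges_at_def)
  ultimately show ?thesis
    unfolding u_NM_def d1i_def by (simp add: card_Diff_subset)
qed

lemma nash_NM_d2_le_d1i:
  assumes "hypergraph V E" "\<forall>e\<in>E. card e \<ge> 2" "nash_NM k V E c"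
    and "v \<in> V" "i \<in> {1..k} - {c v}"
  shows "d2 E c v \<le> d1i E c v i"
proof -
  have "u_NM E (c(v := i)) v \<le> u_NM E c v"
    using assms(3-5) by (auto simp: nash_NM_def)
  moreover have "\<forall>e\<in>edges_at E v. card e \<ge> 2"
    using assms(2) by (simp add: edges_at_def)
  ultimately have "card (edges_at E v) - d1i E c v i \<le> card (edges_at E v) - d2 E c v"
    using assms(5) u_NM_eq_card_minus_d2[OF assms(1), of c v]
      u_NM_recolour_eq_card_minus_d1i[OF assms(1), of v i c] by simp
  moreover have "finite (edges_at E v)"
    using assms(1) by (simp add: hypergraph_def edges_at_def)
  then have "d1i E c v i \<le> card (edges_at E v)" "d2 E c v \<le> card (edges_at E v)"
    unfolding d1i_def d2_def by (auto intro: card_mono)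
  ultimately show ?thesis by linarith
qed

lemma nash_NM_sum_d1_ge_sum_d2:
  assumes "hypergraph V E" "\<forall>e\<in>E. card e \<ge> 2" "k_coloring k V c" "nash_NM k V E c"
  shows "(k - 1) * (\<Sum>v\<in>V. d2 E c v) \<le> (\<Sum>v\<in>V. d1 k E c v)"
proof -
  have "(k - 1) * d2 E c v \<le> d1 k E c v" if v: "v \<in> V" for v
  proof -
    have "card ({1..k} - {c v}) = k - 1"
      using v assms(3) by (simp add: k_coloring_def)
    then have "(k - 1) * d2 E c v = (\<Sum>i\<in>{1..k} - {c v}. d2 E c v)"
      by (simp only: sum_constant of_nat_id)
    also have "\<dots> \<le> d1 k E c v"
      unfolding d1_def using nash_NM_d2_le_d1i[OF assms(1,2,4) v] by (intro sum_mono) blast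
    finally show ?thesis .
  qed
  then show ?thesis
    by (simp add: sum_distrib_left sum_mono)
qed

theorem mainTheorem4:
  fixes V :: "'a set" and E :: "'a set set" and c :: "'a \<Rightarrow> nat" and r k :: nat
  assumes "r \<ge> 3" and "k \<ge> 2"
    and "hypergraph V E" and "r_minimal r E"
    and "k_coloring k V c"
  shows "int (\<Sum>v\<in>V. d1 k E c v) + int (\<Sum>v\<in>V. d2 E c v) + int (\<Sum>v\<in>V. d3 E c v)
           + (\<Sum>v\<in>V. d4 k E c v) = int (\<Sum>v\<in>V. card (edges_at E v))
         \<and> (\<Sum>v\<in>V. d3 E c v) \<ge> (r - 1) * (\<Sum>v\<in>V. d1 k E c v)
         \<and> (nash_NM k V E c \<longrightarrow> (\<Sum>v\<in>V. d1 k E c v) \<ge> (k - 1) * (\<Sum>v\<in>V. d2 E c v))"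
proof (intro conjI impI)
  show "int (\<Sum>v\<in>V. d1 k E c v) + int (\<Sum>v\<in>V. d2 E c v) + int (\<Sum>v\<in>V. d3 E c v)
           + (\<Sum>v\<in>V. d4 k E c v) = int (\<Sum>v\<in>V. card (edges_at E v))"
    by (simp add: d4_def sum_subtractf of_nat_sum sum.distrib)
  show "(\<Sum>v\<in>V. d3 E c v) \<ge> (r - 1) * (\<Sum>v\<in>V. d1 k E c v)"
    using assms by (intro sum_d3_ge_sum_d1)
  have "\<forall>e\<in>E. card e \<ge> 2"
    using assms(1,4) by (force simp: r_minimal_def)
  then show "(\<Sum>v\<in>V. d1 k E c v) \<ge> (k - 1) * (\<Sum>v\<in>V. d2 E c v)"
    if "nash_NM k V E c"
    using assms(3,5) that by (intro nash_NM_sum_d1_ge_sum_d2)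
qed

end
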